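(* Let $G=(V,E)$ be a graph with $n$ vertices, $m$ edges, maximum degree $\Delta$ and arboricity $\alpha$. Procedure Arboricity Edge-Coloring with parameter $h\le\log\alpha$ computes a proper $(\Delta+3\cdot2^h)$-edge-coloring of $G$ in $O\left(\frac{m\alpha^7\log n}{2^{7h}}\right)$ deterministic time. Its randomized version requires $O\left(\frac{m\alpha\log n}{2^h}\right)$ expected time.
   Context: Logarithms are base 2. The arboricity of $G$ is $\max_{S\subseteq V,|S|\ge2}\lceil |E(G[S])|/(|S|-1)\rceil$. A proper $k$-edge-coloring is a map $\varphi:E\to\{1,\dots,k\}$ with distinct colors on distinct edges sharing an endpoint. An oriented degree-splitting of $(H,\mu)$ with discrepancy $\kappa$ is a partition $(E_1,E_2)$ of $E(H)$ such that for every vertex $v$, the numbers of incoming edges of $v$ in $E_1$ and in $E_2$ differ by at most $\kappa$, and likewise for outgoing edges. Procedure Forests-Decomposition Orientation$(G)$: starting from $\mathcal A=V$, repeatedly pick $v\in\mathcal A$ of minimum degree in $G[\mathcal A]$, orient every edge from $v$ to its neighbours in $\mathcal A$, and remove $v$ from $\mathcal A$, until $\mathcal A=\emptyset$. Procedure Oriented Edge-Coloring$(H,\mu,h)$: if $h=0$, return a proper $(\Delta(H)+1)$-edge-coloring of $H$ computed by a base-case subroutine; otherwise compute in $O(|E(H)|)$ time an oriented degree-splitting $(E_1,E_2)$ of $(H,\mu)$ with discrepancy at most 1, let $H_1=(V,E_1)$, $H_2=(V,E_2)$ with orientation induced by $\mu$, compute $\varphi_1=$ Oriented Edge-Coloring$(H_1,\mu,h-1)$,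 $\varphi_2=$ Oriented Edge-Coloring$(H_2,\mu,h-1)$, and return $\varphi=\varphi_1$ on $E_1$ and $\varphi=p_1+\varphi_2$ on $E_2$, where $p_1$ is the palette size of $\varphi_1$. Procedure Arboricity Edge-Coloring$(G,h)$: compute $\mu=$ Forests-Decomposition Orientation$(G)$ and return Oriented Edge-Coloring$(G,\mu,h)$. Deterministic version: the base-case subroutine is a deterministic algorithm computing a proper $(\Delta'+1)$-edge-coloring of an $n'$-vertex $m'$-edge graph with maximum degree $\Delta'$ and arboricity $\alpha'$ in $O(m'\alpha'^7\log n')$ time. Randomized version: the base-case subroutine is a randomized algorithm computing a proper $(\Delta'+1)$-edge-coloring in expected $O(m'\alpha'\log n')$ time. *)

theory Defs
  imports Complex_Main
begin

definition graph :: "'a set \<Rightarrow> 'a set set \<Rightarrow> bool" where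
  "graph V E \<longleftrightarrow> finite V \<and> (\<forall>e\<in>E. e \<subseteq> V \<and> card e = 2)"

definition degree_in :: "'a set set \<Rightarrow> 'a \<Rightarrow> nat" where
  "degree_in E v = card {e\<in>E. v \<in> e}"

definition max_degree :: "'a set \<Rightarrow> 'a set set \<Rightarrow> nat" where
  "max_degree V E = Max (insert 0 (degree_in E ` V))"

definition induced_edges :: "'a set set \<Rightarrow> 'a set \<Rightarrow> 'a set set" where
  "induced_edges E S = {e\<in>E. e \<subseteq> S}"

definition arboricity :: "'a set \<Rightarrow> 'a set set \<Rightarrow> nat" where
  "arboricity V E = Max (insert 0 {nat \<lceil>real (card (induced_edges E S)) / real (card S - 1)\<rceil> | S. S \<subseteq> V \<and> card S \<ge> 2})"

definition proper_edge_coloring :: "'a set set \<Rightarrow> nat \<Rightarrow> ('a set \<Rightarrow> nat) \<Rightarrow> bool" where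
  "proper_edge_coloring E k \<phi> \<longleftrightarrow>
     (\<forall>e\<in>E. \<phi> e \<in> {1..k}) \<and>
     (\<forall>e\<in>E. \<forall>e'\<in>E. e \<noteq> e' \<and> e \<inter> e' \<noteq> {} \<longrightarrow> \<phi> e \<noteq> \<phi> e')"

(* An orientation is given by the tail of each edge: edge e is oriented from tail e
   to its other endpoint. *)
definition out_edges :: "'a set set \<Rightarrow> ('a set \<Rightarrow> 'a) \<Rightarrow> 'a \<Rightarrow> 'a set set" where
  "out_edges F tail v = {e\<in>F. tail e = v}"

definition in_edges :: "'a set set \<Rightarrow> ('a set \<Rightarrow> 'a) \<Rightarrow> 'a \<Rightarrow> 'a set set" where
  "in_edges F tail v = {e\<in>F. v \<in> e \<and> tail e \<noteq> v}"

definition oriented_degree_splitting ::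
  "'a set \<Rightarrow> 'a set set \<Rightarrow> ('a set \<Rightarrow> 'a) \<Rightarrow> nat \<Rightarrow> 'a set set \<Rightarrow> 'a set set \<Rightarrow> bool" where
  "oriented_degree_splitting V H tail \<kappa> E1 E2 \<longleftrightarrow>
     E1 \<union> E2 = H \<and> E1 \<inter> E2 = {} \<and>
     (\<forall>v\<in>V. \<bar>int (card (in_edges E1 tail v)) - int (card (in_edges E2 tail v))\<bar> \<le> int \<kappa> \<and>
            \<bar>int (card (out_edges E1 tail v)) - int (card (out_edges E2 tail v))\<bar> \<le> int \<kappa>)"

(* Possible outputs of Procedure Forests-Decomposition Orientation (any tie-breaking):
   vs is the order in which vertices are removed from \<A>; vs!i has minimum degree in
   G[set (drop i vs)]; each edge is oriented from the earlier-removed endpoint. *)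
definition forests_decomposition_orientation :: "'a set \<Rightarrow> 'a set set \<Rightarrow> ('a set \<Rightarrow> 'a) \<Rightarrow> bool" where
  "forests_decomposition_orientation V E tail \<longleftrightarrow>
     (\<exists>vs. distinct vs \<and> set vs = V \<and>
        (\<forall>i<length vs. \<forall>u\<in>set (drop i vs).
            degree_in (induced_edges E (set (drop i vs))) (vs ! i)
              \<le> degree_in (induced_edges E (set (drop i vs))) u) \<and>
        (\<forall>e\<in>E. \<forall>i<length vs. \<forall>j<length vs. e = {vs ! i, vs ! j} \<and> i < j \<longrightarrow> tail e = vs ! i))"

(* Runs of Procedure Oriented Edge-Coloring(H, tail, h) on vertex set V.
   oec_run C c k V tail H h \<phi> p cost: a possible run returns colouring \<phi> with palette size p,
   and cost is an upper bound on its running time, where the base-case subroutine costs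
   at most C * m' * \<alpha>'^k * log n' and the degree-splitting at most c * |E(H)|. *)
inductive oec_run :: "real \<Rightarrow> real \<Rightarrow> nat \<Rightarrow> 'a set \<Rightarrow> ('a set \<Rightarrow> 'a) \<Rightarrow> 'a set set \<Rightarrow> nat
     \<Rightarrow> ('a set \<Rightarrow> nat) \<Rightarrow> nat \<Rightarrow> real \<Rightarrow> bool"
  for C c :: real and k :: nat and V :: "'a set" and tail :: "'a set \<Rightarrow> 'a" where
  base: "proper_edge_coloring H (max_degree V H + 1) \<phi> \<Longrightarrow>
         cost \<le> C * real (card H) * real (arboricity V H) ^ k * log 2 (real (card V)) \<Longrightarrow>
         oec_run C c k V tail H 0 \<phi> (max_degree V H + 1) cost"
| step: "oriented_degree_splitting V H tail 1 E1 E2 \<Longrightarrow>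
         oec_run C c k V tail E1 h \<phi>1 p1 c1 \<Longrightarrow>
         oec_run C c k V tail E2 h \<phi>2 p2 c2 \<Longrightarrow>
         cost \<le> c * real (card H) + c1 + c2 \<Longrightarrow>
         oec_run C c k V tail H (Suc h) (\<lambda>e. if e \<in> E1 then \<phi>1 e else p1 + \<phi>2 e) (p1 + p2) cost"

(* Runs of Procedure Arboricity Edge-Coloring(G, h); orientation step costs at most c * m *)
definition arb_run :: "real \<Rightarrow> real \<Rightarrow> nat \<Rightarrow> 'a set \<Rightarrow> 'a set set \<Rightarrow> nat
     \<Rightarrow> ('a set \<Rightarrow> nat) \<Rightarrow> nat \<Rightarrow> real \<Rightarrow> bool" where
  "arb_run C c k V E h \<phi> p cost \<longleftrightarrow>
     (\<exists>tail cst. forests_decomposition_orientation V E tail \<and>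
        oec_run C c k V tail E h \<phi> p cst \<and> cost \<le> c * real (card E) + cst)"

end

theory Submission
  imports Defs
begin

text \<open>A degree splitting with discrepancy 1 halves every in- and out-degree up to an additive 1.
  Hence the degree bound \<Delta> becomes at most \<Delta>/2^h + 2 in each of the 2^h leaf graphs, whose
  (\<Delta>' + 1)-colourings with disjoint palettes use at most \<Delta> + 3 * 2^h - 2 colours in total.
  The minimum-degree elimination order orients every edge so that out-degrees are at most
  2\<alpha>; halving h times leaves out-degree about 2\<alpha>/2^h, so every leaf has arboricity
  O(\<alpha>/2^h). The leaves partition E, so the base cases cost
  O(m (\<alpha>/2^h)^k log n), and the h levels of linear-time splitting cost O(m h) with
  h \<le> log \<alpha> \<le> log n.\<close>

lemma graph_finite_edges: "graph V E \<Longrightarrow> finite E"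
  unfolding graph_def by (meson Pow_iff finite_Pow_iff rev_finite_subset subsetI)

lemma graph_subset: "graph V E \<Longrightarrow> F \<subseteq> E \<Longrightarrow> graph V F"
  unfolding graph_def by blast

lemma graph_induced_edges: "graph V E \<Longrightarrow> S \<subseteq> V \<Longrightarrow> graph S (induced_edges E S)"
  unfolding graph_def induced_edges_def by (auto intro: finite_subset)

lemma card_vertices_ge_two: "graph V E \<Longrightarrow> E \<noteq> {} \<Longrightarrow> 2 \<le> card V"
  unfolding graph_def by (metis card_mono equals0I)

lemma card_edges_le_choose_two:
  assumes "graph V E"
  shows "card E \<le> card V choose 2"
proof -
  have fin: "finite V" and "E \<subseteq> {B. B \<subseteq> V \<and> card B = 2}"
    using assms unfolding graph_def by blast+
  moreover have "finite {B. B \<subseteq> V \<and> card B = 2}" using fin by simp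
  ultimately have "card E \<le> card {B. B \<subseteq> V \<and> card B = 2}" by (meson card_mono)
  also have "\<dots> = card V choose 2" using fin by (rule n_subsets)
  finally show ?thesis .
qed

lemma sum_degree_in:
  assumes "graph V E"
  shows "(\<Sum>v\<in>V. degree_in E v) = 2 * card E"
proof -
  have fin: "finite V" "finite E" using assms graph_finite_edges unfolding graph_def by blast+
  have "degree_in E v = (\<Sum>e\<in>E. if v \<in> e then 1 else 0)" for v
    unfolding degree_in_def using sum.inter_filter[OF fin(2), of "\<lambda>_. 1::nat"] by simp
  then have "(\<Sum>v\<in>V. degree_in E v) = (\<Sum>v\<in>V. \<Sum>e\<in>E. if v \<in> e then 1 else 0)"
    by simp
  also have "\<dots> = (\<Sum>e\<in>E. \<Sum>v\<in>V. if v \<in> e then 1 else 0)" by (rule sum.swap)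
  also have "\<dots> = (\<Sum>e\<in>E. card e)"
  proof (rule sum.cong[OF refl])
    fix e assume "e \<in> E"
    then have "{v\<in>V. v \<in> e} = e" using assms unfolding graph_def by blast
    then show "(\<Sum>v\<in>V. if v \<in> e then 1 else 0) = card e"
      using fin by (simp add: sum.inter_filter[symmetric])
  qed
  also have "\<dots> = 2 * card E" using assms unfolding graph_def by simp
  finally show ?thesis .
qed

definition oriented_graph :: "'a set \<Rightarrow> ('a set \<Rightarrow> 'a) \<Rightarrow> 'a set set \<Rightarrow> bool" where
  "oriented_graph V tail H \<longleftrightarrow> graph V H \<and> (\<forall>e\<in>H. tail e \<in> e)"

lemma oriented_graph_subset: "oriented_graph V tail H \<Longrightarrow> F \<subseteq> H \<Longrightarrow> oriented_graph V tail F"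
  unfolding oriented_graph_def using graph_subset by blast

lemma degree_in_eq_in_out:
  assumes "oriented_graph V tail H"
  shows "degree_in H v = card (in_edges H tail v) + card (out_edges H tail v)"
proof -
  have "finite H" using assms graph_finite_edges unfolding oriented_graph_def by blast
  moreover have "{e\<in>H. v \<in> e} = in_edges H tail v \<union> out_edges H tail v"
    using assms unfolding oriented_graph_def in_edges_def out_edges_def by auto
  moreover have "in_edges H tail v \<inter> out_edges H tail v = {}"
    unfolding in_edges_def out_edges_def by auto
  ultimately show ?thesis
    unfolding degree_in_def by (simp add: card_Un_disjoint in_edges_def out_edges_def)
qed

lemma degree_le_max_degree: "finite V \<Longrightarrow> v \<in> V \<Longrightarrow> degree_in E v \<le> max_degree V E"
  unfolding max_degree_def by (rule Max_ge) auto

lemma max_degree_le: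
  assumes "finite V" "0 \<le> T" "\<And>v. v \<in> V \<Longrightarrow> real (degree_in E v) \<le> T"
  shows "real (max_degree V E) \<le> T"
proof -
  have "max_degree V E \<in> insert 0 (degree_in E ` V)"
    unfolding max_degree_def using assms(1) by (intro Max_in) auto
  then show ?thesis using assms by auto
qed

lemma card_induced_edges_le_arboricity:
  assumes "finite V" "S \<subseteq> V" "2 \<le> card S"
  shows "real (card (induced_edges E S)) \<le> real (arboricity V E) * real (card S - 1)"
proof -
  let ?r = "real (card (induced_edges E S)) / real (card S - 1)"
  have "nat \<lceil>?r\<rceil> \<in> {nat \<lceil>real (card (induced_edges E S)) / real (card S - 1)\<rceil> |S.
      S \<subseteq> V \<and> 2 \<le> card S}"
    using assms(2,3) by blast
  then have "nat \<lceil>?r\<rceil> \<le> arboricity V E"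
    unfolding arboricity_def using assms(1) by (intro Max_ge) auto
  then have "?r \<le> real (arboricity V E)"
    by (meson order_trans real_nat_ceiling_ge of_nat_le_iff)
  then show ?thesis using assms(3) by (simp add: divide_le_eq)
qed

lemma arboricity_le:
  assumes "finite V" "0 \<le> R"
    and "\<And>S. S \<subseteq> V \<Longrightarrow> 2 \<le> card S \<Longrightarrow> real (card (induced_edges E S)) \<le> R * real (card S - 1)"
  shows "arboricity V E \<le> nat \<lceil>R\<rceil>"
  unfolding arboricity_def
proof (rule Max.boundedI)
  show "finite (insert 0 {nat \<lceil>real (card (induced_edges E S)) / real (card S - 1)\<rceil> |S.
      S \<subseteq> V \<and> 2 \<le> card S})"
    using assms(1) by simp
next
  fix x assume "x \<in> insert 0 {nat \<lceil>real (card (induced_edges E S)) / real (card S - 1)\<rceil> |S.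
      S \<subseteq> V \<and> 2 \<le> card S}"
  then consider "x = 0"
    | S where "S \<subseteq> V" "2 \<le> card S" "x = nat \<lceil>real (card (induced_edges E S)) / real (card S - 1)\<rceil>"
    by blast
  then show "x \<le> nat \<lceil>R\<rceil>"
  proof cases
    case (2 S)
    then have "real (card (induced_edges E S)) / real (card S - 1) \<le> R"
      using assms(3) by (simp add: divide_le_eq)
    then show ?thesis unfolding 2(3) by (intro nat_mono ceiling_mono)
  qed simp
qed simp

lemma arboricity_le_card:
  assumes "graph V E"
  shows "arboricity V E \<le> card V"
proof -
  have fin: "finite V" using assms unfolding graph_def by blast
  have "real (card (induced_edges E S)) \<le> real (card V) * real (card S - 1)"
    if S: "S \<subseteq> V" "2 \<le> card S" for S
  proof -
    have "card (induced_edges E S) \<le> card S choose 2"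
      using card_edges_le_choose_two graph_induced_edges[OF assms S(1)] by blast
    then have "2 * card (induced_edges E S) \<le> 2 * (card S * (card S - 1) div 2)"
      by (simp add: choose_two)
    also have "\<dots> \<le> card S * (card S - 1)" by simp
    finally have "2 * real (card (induced_edges E S)) \<le> real (card S) * real (card S - 1)"
      by (metis of_nat_le_iff of_nat_mult of_nat_numeral)
    also have "\<dots> \<le> (2 * real (card V)) * real (card S - 1)"
      using card_mono[OF fin S(1)] by (intro mult_right_mono) auto
    finally show ?thesis by simp
  qed
  then show ?thesis using arboricity_le[OF fin, of "real (card V)"] by simp
qed

lemma one_le_arboricity:
  assumes "graph V E" "E \<noteq> {}"
  shows "1 \<le> arboricity V E"
proof -
  obtain e where e: "e \<in> E" using assms(2) by blast
  then have "e \<subseteq> V" "card e = 2" using assms(1) unfolding graph_def by auto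
  moreover have "induced_edges E e \<noteq> {}" "finite (induced_edges E e)"
    using e graph_finite_edges[OF assms(1)] unfolding induced_edges_def by auto
  ultimately have "1 \<le> real (card (induced_edges E e))"
    by (simp add: Suc_leI card_gt_0_iff)
  also have "\<dots> \<le> real (arboricity V E) * real (card e - 1)"
    using assms(1) \<open>e \<subseteq> V\<close> \<open>card e = 2\<close> unfolding graph_def
    by (intro card_induced_edges_le_arboricity) auto
  finally show ?thesis using \<open>card e = 2\<close> by simp
qed

lemma arboricity_le_out_degree:
  assumes H: "oriented_graph V tail H" and B: "0 \<le> B" "\<forall>v\<in>V. real (card (out_edges H tail v)) \<le> B"
  shows "real (arboricity V H) \<le> 2 * B + 1"
proof -
  have fV: "finite V" and fH: "finite H"
    using H graph_finite_edges unfolding oriented_graph_def graph_def by blast+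
  have "real (card (induced_edges H S)) \<le> 2 * B * real (card S - 1)"
    if S: "S \<subseteq> V" "2 \<le> card S" for S
  proof -
    have fS: "finite S" using S fV finite_subset by blast
    \<comment> \<open>every edge inside S leaves its tail, which lies in S\<close>
    have "induced_edges H S \<subseteq> (\<Union>v\<in>S. out_edges H tail v)"
      using H unfolding induced_edges_def out_edges_def oriented_graph_def by blast
    then have "card (induced_edges H S) \<le> card (\<Union>v\<in>S. out_edges H tail v)"
      by (rule card_mono[rotated]) (auto simp: out_edges_def intro: rev_finite_subset[OF fH])
    also have "\<dots> \<le> (\<Sum>v\<in>S. card (out_edges H tail v))" using fS by (rule card_UN_le)
    finally have "real (card (induced_edges H S)) \<le> (\<Sum>v\<in>S. real (card (out_edges H tail v)))"
      by (metis of_nat_le_iff of_nat_sum)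
    also have "\<dots> \<le> (\<Sum>v\<in>S. B)" using B(2) S(1) by (intro sum_mono) auto
    also have "\<dots> = B * real (card S)" by simp
    also have "\<dots> \<le> 2 * B * real (card S - 1)"
      using mult_left_mono[of 2 "real (card S)" B] B(1) S(2) by (simp add: of_nat_diff algebra_simps)
    finally show ?thesis .
  qed
  then have "arboricity V H \<le> nat \<lceil>2 * B\<rceil>" using B(1) by (intro arboricity_le[OF fV]) auto
  moreover have "real (nat \<lceil>2 * B\<rceil>) = of_int \<lceil>2 * B\<rceil>" using B(1) by simp
  ultimately show ?thesis using of_int_ceiling_le_add_one[of "2 * B"] by linarith
qed

lemma min_degree_le_twice_arboricity:
  assumes G: "graph V E" and S: "S \<subseteq> V" "v \<in> S"
    and min: "\<forall>u\<in>S. degree_in (induced_edges E S) v \<le> degree_in (induced_edges E S) u"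
  shows "real (degree_in (induced_edges E S) v) \<le> 2 * real (arboricity V E)"
proof (cases "2 \<le> card S")
  case True
  let ?ES = "induced_edges E S"
  have fV: "finite V" using G unfolding graph_def by blast
  have "card S * degree_in ?ES v \<le> (\<Sum>u\<in>S. degree_in ?ES u)"
    using sum_mono[of S "\<lambda>_. degree_in ?ES v" "degree_in ?ES"] min by simp
  also have "\<dots> = 2 * card ?ES" using graph_induced_edges[OF G S(1)] by (rule sum_degree_in)
  finally have "real (card S) * real (degree_in ?ES v) \<le> 2 * real (card ?ES)"
    by (metis of_nat_le_iff of_nat_mult of_nat_numeral)
  also have "\<dots> \<le> 2 * (real (arboricity V E) * real (card S - 1))"
    using card_induced_edges_le_arboricity[OF fV S(1) True] by simp
  also have "\<dots> \<le> 2 * (real (arboricity V E) * real (card S))"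
    by (intro mult_left_mono) auto
  also have "\<dots> = real (card S) * (2 * real (arboricity V E))" by simp
  finally show ?thesis using True by simp
next
  case False
  then have "induced_edges E S = {}"
    using card_vertices_ge_two[OF graph_induced_edges[OF G S(1)]] by linarith
  then show ?thesis unfolding degree_in_def by simp
qed

lemma edge_eq_pair_nth:
  assumes "graph V E" "set vs = V" "e \<in> E"
  obtains i j where "i < j" "j < length vs" "e = {vs ! i, vs ! j}"
proof -
  obtain x y where xy: "e = {x, y}" "x \<noteq> y" "x \<in> V" "y \<in> V"
    using assms unfolding graph_def by (metis card_2_iff insert_subset)
  then obtain i j where ij: "i < length vs" "vs ! i = x" "j < length vs" "vs ! j = y"
    using assms(2) by (metis in_set_conv_nth)
  then have "i \<noteq> j" using xy by auto
  then consider "i < j" | "j < i" by linarith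
  then show ?thesis
  proof cases
    case 1
    then show ?thesis using that ij xy by blast
  next
    case 2
    then show ?thesis using that[of j i] ij xy by (simp add: insert_commute)
  qed
qed

lemma forests_decomposition_orientation_oriented_graph:
  assumes G: "graph V E" and F: "forests_decomposition_orientation V E tail"
  shows "oriented_graph V tail E"
proof -
  obtain vs where vs: "set vs = V"
    "\<forall>e\<in>E. \<forall>i<length vs. \<forall>j<length vs. e = {vs ! i, vs ! j} \<and> i < j \<longrightarrow> tail e = vs ! i"
    using F unfolding forests_decomposition_orientation_def by blast
  have "tail e \<in> e" if "e \<in> E" for e
    using edge_eq_pair_nth[OF G vs(1) that] vs(2) that
    by (metis insertI1 order.strict_trans)
  then show ?thesis using G unfolding oriented_graph_def by blast
qed

text \<open>When v is removed it has minimum degree among the remaining vertices, and all its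
  out-edges lead to remaining vertices.\<close>
lemma forests_decomposition_orientation_out_degree_le:
  assumes G: "graph V E" and F: "forests_decomposition_orientation V E tail" and v: "v \<in> V"
  shows "real (card (out_edges E tail v)) \<le> 2 * real (arboricity V E)"
proof -
  obtain vs where vs: "distinct vs" "set vs = V"
    "\<forall>i<length vs. \<forall>u\<in>set (drop i vs).
       degree_in (induced_edges E (set (drop i vs))) (vs ! i)
         \<le> degree_in (induced_edges E (set (drop i vs))) u"
    "\<forall>e\<in>E. \<forall>i<length vs. \<forall>j<length vs. e = {vs ! i, vs ! j} \<and> i < j \<longrightarrow> tail e = vs ! i"
    using F unfolding forests_decomposition_orientation_def by blast
  obtain i where i: "i < length vs" "vs ! i = v" using v vs(2) by (metis in_set_conv_nth)
  define S where "S = set (drop i vs)"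
  have in_S: "vs ! k \<in> S" if "i \<le> k" "k < length vs" for k
    using that nth_mem[of "k - i" "drop i vs"] unfolding S_def by simp
  have "v \<in> S" using in_S[of i] i by simp
  have "S \<subseteq> V" using vs(2) set_drop_subset unfolding S_def by metis
  have "out_edges E tail v \<subseteq> {e \<in> induced_edges E S. v \<in> e}"
  proof
    fix e assume "e \<in> out_edges E tail v"
    then have e: "e \<in> E" "tail e = v" unfolding out_edges_def by auto
    obtain a b where ab: "a < b" "b < length vs" "e = {vs ! a, vs ! b}"
      using edge_eq_pair_nth[OF G vs(2) e(1)] .
    then have "vs ! a = vs ! i" using vs(4) e i by auto
    then have "a = i" using nth_eq_iff_index_eq[OF vs(1), of a i] ab i by simp
    then show "e \<in> {e \<in> induced_edges E S. v \<in> e}"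
      using ab in_S e(1) i unfolding induced_edges_def by auto
  qed
  then have "card (out_edges E tail v) \<le> degree_in (induced_edges E S) v"
    unfolding degree_in_def induced_edges_def using graph_finite_edges[OF G] by (intro card_mono) auto
  also have "real (degree_in (induced_edges E S) v) \<le> 2 * real (arboricity V E)"
    using min_degree_le_twice_arboricity[OF G \<open>S \<subseteq> V\<close> \<open>v \<in> S\<close>] vs(3) i unfolding S_def by blast
  finally show ?thesis by simp
qed

lemma oriented_degree_splitting_swap:
  "oriented_degree_splitting V H tail \<kappa> E1 E2 \<Longrightarrow> oriented_degree_splitting V H tail \<kappa> E2 E1"
  unfolding oriented_degree_splitting_def by (auto simp: abs_minus_commute)

lemma oriented_degree_splitting_card:
  assumes "oriented_degree_splitting V H tail \<kappa> E1 E2" "finite H"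
  shows "E1 \<subseteq> H" "card H = card E1 + card E2"
  using assms card_Un_disjoint[of E1 E2] unfolding oriented_degree_splitting_def by auto

lemma card_le_half_of_balanced_partition:
  assumes "finite A" "A = B \<union> C" "B \<inter> C = {}" "\<bar>int (card B) - int (card C)\<bar> \<le> 1"
  shows "real (card B) \<le> (real (card A) + 1) / 2"
proof -
  have "card A = card B + card C" using assms(1-3) by (simp add: card_Un_disjoint)
  then show ?thesis using assms(4) by (simp add: abs_le_iff)
qed

lemma oriented_degree_splitting_out_degree_le:
  assumes "oriented_degree_splitting V H tail 1 E1 E2" "finite H" "v \<in> V"
  shows "real (card (out_edges E1 tail v)) \<le> (real (card (out_edges H tail v)) + 1) / 2"
  using assms unfolding oriented_degree_splitting_def
  by (intro card_le_half_of_balanced_partition[where C = "out_edges E2 tail v"])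
     (auto simp: out_edges_def)

lemma oriented_degree_splitting_in_degree_le:
  assumes "oriented_degree_splitting V H tail 1 E1 E2" "finite H" "v \<in> V"
  shows "real (card (in_edges E1 tail v)) \<le> (real (card (in_edges H tail v)) + 1) / 2"
  using assms unfolding oriented_degree_splitting_def
  by (intro card_le_half_of_balanced_partition[where C = "in_edges E2 tail v"])
     (auto simp: in_edges_def)

lemma oriented_degree_splitting_degree_le:
  assumes H: "oriented_graph V tail H" and split: "oriented_degree_splitting V H tail 1 E1 E2"
    and v: "v \<in> V"
  shows "real (degree_in E1 v) \<le> real (degree_in H v) / 2 + 1"
proof -
  have fin: "finite H" using H graph_finite_edges unfolding oriented_graph_def by blast
  have "oriented_graph V tail E1"
    using oriented_graph_subset[OF H oriented_degree_splitting_card(1)[OF split fin]] .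
  then have "real (degree_in E1 v) = real (card (in_edges E1 tail v)) + real (card (out_edges E1 tail v))"
    by (simp add: degree_in_eq_in_out)
  moreover have "real (degree_in H v) = real (card (in_edges H tail v)) + real (card (out_edges H tail v))"
    using H by (simp add: degree_in_eq_in_out)
  ultimately show ?thesis
    using oriented_degree_splitting_out_degree_le[OF split fin v]
      oriented_degree_splitting_in_degree_le[OF split fin v]
    by argo
qed

lemma proper_edge_coloring_mono:
  "proper_edge_coloring H p \<phi> \<Longrightarrow> p \<le> q \<Longrightarrow> proper_edge_coloring H q \<phi>"
  unfolding proper_edge_coloring_def by auto

lemma proper_edge_coloring_Un:
  assumes "proper_edge_coloring E1 p1 \<phi>1" "proper_edge_coloring E2 p2 \<phi>2"
  shows "proper_edge_coloring (E1 \<union> E2) (p1 + p2) (\<lambda>e. if e \<in> E1 then \<phi>1 e else p1 + \<phi>2 e)"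
proof -
  note range = assms(1,2)[unfolded proper_edge_coloring_def, THEN conjunct1, rule_format]
  note clash = assms(1,2)[unfolded proper_edge_coloring_def, THEN conjunct2, rule_format]
  show ?thesis
    unfolding proper_edge_coloring_def
  proof (intro conjI ballI impI)
    fix e assume "e \<in> E1 \<union> E2"
    then show "(if e \<in> E1 then \<phi>1 e else p1 + \<phi>2 e) \<in> {1..p1 + p2}"
      using range[of e] by auto
  next
    fix e e' assume "e \<in> E1 \<union> E2" "e' \<in> E1 \<union> E2" "e \<noteq> e' \<and> e \<inter> e' \<noteq> {}"
    then show "(if e \<in> E1 then \<phi>1 e else p1 + \<phi>2 e) \<noteq> (if e' \<in> E1 then \<phi>1 e' else p1 + \<phi>2 e')"
      using range[of e] range[of e'] clash[of e e'] by auto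
  qed
qed

lemma oec_run_proper: "oec_run C c k V tail H h \<phi> p cost \<Longrightarrow> proper_edge_coloring H p \<phi>"
proof (induction rule: oec_run.induct)
  case (step H E1 E2 h \<phi>1 p1 c1 \<phi>2 p2 c2 cost)
  then show ?case
    using proper_edge_coloring_Un[of E1 p1 \<phi>1 E2 p2 \<phi>2]
    unfolding oriented_degree_splitting_def by auto
qed

lemma oec_run_palette_le:
  assumes "oec_run C c k V tail H h \<phi> p cost"
  shows "oriented_graph V tail H \<Longrightarrow> 0 \<le> T \<Longrightarrow> \<forall>v\<in>V. real (degree_in H v) \<le> T \<Longrightarrow>
    real p \<le> T + 3 * 2 ^ h - 2"
  using assms
proof (induction arbitrary: T rule: oec_run.induct)
  case (base H \<phi> cost)
  have "finite V" using base.prems(1) unfolding oriented_graph_def graph_def by blast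
  then show ?case using max_degree_le[of V T H] base.prems by simp
next
  case (step H E1 E2 h \<phi>1 p1 c1 \<phi>2 p2 c2 cost)
  have fin: "finite H" using step.prems(1) graph_finite_edges unfolding oriented_graph_def by blast
  have split2: "oriented_degree_splitting V H tail 1 E2 E1"
    using step.hyps(1) by (rule oriented_degree_splitting_swap)
  have "real p1 \<le> T / 2 + 1 + 3 * 2 ^ h - 2"
    using step.IH(1)[of "T / 2 + 1"] step.prems
      oriented_graph_subset[OF step.prems(1) oriented_degree_splitting_card(1)[OF step.hyps(1) fin]]
      oriented_degree_splitting_degree_le[OF step.prems(1) step.hyps(1)]
    by fastforce
  moreover have "real p2 \<le> T / 2 + 1 + 3 * 2 ^ h - 2"
    using step.IH(2)[of "T / 2 + 1"] step.prems
      oriented_graph_subset[OF step.prems(1) oriented_degree_splitting_card(1)[OF split2 fin]]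
      oriented_degree_splitting_degree_le[OF step.prems(1) split2]
    by fastforce
  ultimately show ?case by simp
qed

lemma log2_of_nat_nonneg: "0 \<le> log 2 (real n)"
  \<comment> \<open>including n = 0, where log 2 0 = 0\<close>
  by (cases n) (auto simp: log_def)

text \<open>A split half has out-degree bound (D + 1) / 2, and the bound (D - 1) / 2^h + 1 is exactly
  invariant under this recursion.\<close>
lemma oec_run_cost_le:
  assumes "oec_run C c k V tail H h \<phi> p cost"
  shows "oriented_graph V tail H \<Longrightarrow> 0 \<le> D \<Longrightarrow>
    \<forall>v\<in>V. real (card (out_edges H tail v)) \<le> D \<Longrightarrow>
    cost \<le> \<bar>c\<bar> * real h * real (card H)
       + \<bar>C\<bar> * real (card H) * (2 * ((D - 1) / 2 ^ h + 1) + 1) ^ k * log 2 (real (card V))"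
  using assms
proof (induction arbitrary: D rule: oec_run.induct)
  case (base H \<phi> cost)
  let ?L = "log 2 (real (card V))"
  have "real (arboricity V H) ^ k \<le> (2 * D + 1) ^ k"
    using arboricity_le_out_degree[OF base.prems] by (simp add: power_mono)
  then have "C * real (card H) * real (arboricity V H) ^ k * ?L
      \<le> \<bar>C\<bar> * real (card H) * (2 * D + 1) ^ k * ?L"
    by (intro mult_right_mono mult_mono) (auto simp: log2_of_nat_nonneg)
  then show ?case using base.hyps(2) by simp
next
  case (step H E1 E2 h \<phi>1 p1 c1 \<phi>2 p2 c2 cost)
  have fin: "finite H" using step.prems(1) graph_finite_edges unfolding oriented_graph_def by blast
  have split2: "oriented_degree_splitting V H tail 1 E2 E1"
    using step.hyps(1) by (rule oriented_degree_splitting_swap)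
  define W where "W = (2 * ((D - 1) / 2 ^ Suc h + 1) + 1) ^ k * log 2 (real (card V))"
  have halve: "((D + 1) / 2 - 1) / 2 ^ h = (D - 1) / 2 ^ Suc h" by (simp add: field_simps)
  have "c1 \<le> \<bar>c\<bar> * real h * real (card E1) + \<bar>C\<bar> * real (card E1) * W"
    using step.IH(1)[of "(D + 1) / 2"] step.prems
      oriented_graph_subset[OF step.prems(1) oriented_degree_splitting_card(1)[OF step.hyps(1) fin]]
      oriented_degree_splitting_out_degree_le[OF step.hyps(1) fin]
    unfolding halve W_def by (fastforce simp: mult.assoc)
  moreover have "c2 \<le> \<bar>c\<bar> * real h * real (card E2) + \<bar>C\<bar> * real (card E2) * W"
    using step.IH(2)[of "(D + 1) / 2"] step.prems
      oriented_graph_subset[OF step.prems(1) oriented_degree_splitting_card(1)[OF split2 fin]]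
      oriented_degree_splitting_out_degree_le[OF split2 fin]
    unfolding halve W_def by (fastforce simp: mult.assoc)
  moreover have "c * real (card H) \<le> \<bar>c\<bar> * real (card H)" by (intro mult_right_mono) auto
  moreover have "real (card H) = real (card E1) + real (card E2)"
    using oriented_degree_splitting_card(2)[OF step.hyps(1) fin] by simp
  ultimately have "cost \<le> \<bar>c\<bar> * real (Suc h) * real (card H) + \<bar>C\<bar> * real (card H) * W"
    using step.hyps(4) by (simp add: algebra_simps)
  then show ?case unfolding W_def by (simp add: mult.assoc)
qed

lemma arb_run_proper_edge_coloring:
  assumes G: "graph V E" and run: "arb_run C c k V E h \<phi> p cost"
  shows "proper_edge_coloring E (max_degree V E + 3 * 2 ^ h) \<phi>"
proof -
  obtain tail cst where F: "forests_decomposition_orientation V E tail"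
    and oec: "oec_run C c k V tail E h \<phi> p cst"
    using run unfolding arb_run_def by blast
  have H: "oriented_graph V tail E" using forests_decomposition_orientation_oriented_graph[OF G F] .
  have fV: "finite V" using G unfolding graph_def by blast
  let ?\<Delta> = "max_degree V E"
  have "real p \<le> real ?\<Delta> + 3 * 2 ^ h - 2"
    using oec_run_palette_le[OF oec H] degree_le_max_degree[OF fV] by simp
  then have "real p \<le> real (?\<Delta> + 3 * 2 ^ h)" by simp
  then have "p \<le> ?\<Delta> + 3 * 2 ^ h" by (simp only: of_nat_le_iff)
  then show ?thesis using oec_run_proper[OF oec] proper_edge_coloring_mono by blast
qed

lemma leaf_arboricity_bound_le:
  fixes a :: real
  assumes "1 \<le> a" "2 ^ h \<le> a"
  shows "(2 * ((2 * a - 1) / 2 ^ h + 1) + 1) ^ k \<le> 7 ^ k * (a / 2 ^ h) ^ k"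
proof -
  let ?X = "2 * ((2 * a - 1) / 2 ^ h + 1) + 1" and ?Q = "a / 2 ^ h"
  have "1 \<le> ?Q" using assms(2) by simp
  moreover have "(2 * a - 1) / 2 ^ h \<le> 2 * ?Q" by (simp add: divide_right_mono)
  ultimately have "?X \<le> 7 * ?Q" by argo
  moreover have "0 \<le> ?X" using assms(1) by simp
  ultimately have "?X ^ k \<le> (7 * ?Q) ^ k" by (rule power_mono)
  then show ?thesis by (simp only: power_mult_distrib)
qed

lemma arb_run_cost_le:
  assumes G: "graph V E" and h: "real h \<le> log 2 (real (arboricity V E))"
    and run: "arb_run C c k V E h \<phi> p cost" and K: "2 * \<bar>c\<bar> + 7 ^ k * \<bar>C\<bar> \<le> K"
  shows "cost \<le> K * real (card E) * real (arboricity V E) ^ k * log 2 (real (card V)) / 2 ^ (k * h)"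
proof -
  obtain tail cst where F: "forests_decomposition_orientation V E tail"
    and oec: "oec_run C c k V tail E h \<phi> p cst" and cost: "cost \<le> c * real (card E) + cst"
    using run unfolding arb_run_def by blast
  have H: "oriented_graph V tail E" using forests_decomposition_orientation_oriented_graph[OF G F] .
  let ?a = "real (arboricity V E)" and ?L = "log 2 (real (card V))" and ?m = "real (card E)"
  let ?X = "2 * ((2 * ?a - 1) / 2 ^ h + 1) + 1" and ?Q = "?a / 2 ^ h"
  have cst: "cst \<le> \<bar>c\<bar> * real h * ?m + \<bar>C\<bar> * ?m * ?X ^ k * ?L"
    using oec_run_cost_le[OF oec H, of "2 * ?a"]
      forests_decomposition_orientation_out_degree_le[OF G F] by simp
  show ?thesis
  proof (cases "E = {}")
    case True
    then show ?thesis using cost cst by simp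
  next
    case False
    have a: "1 \<le> ?a" using one_le_arboricity[OF G False] by simp
    have L: "1 \<le> ?L" using card_vertices_ge_two[OF G False] by simp
    have "2 powr real h \<le> ?a" using h a by (subst (asm) le_log_iff) auto
    then have "2 ^ h \<le> ?a" by (simp add: powr_realpow)
    then have Q: "1 \<le> ?Q ^ k" and X: "?X ^ k \<le> 7 ^ k * ?Q ^ k"
      using a leaf_arboricity_bound_le by (simp_all add: one_le_power)
    have "log 2 ?a \<le> ?L" using a arboricity_le_card[OF G] by (intro log_mono) auto
    then have hL: "real h + 1 \<le> 2 * ?L" using h L by linarith
    have "c * ?m \<le> \<bar>c\<bar> * ?m" by (intro mult_right_mono) auto
    then have "cost \<le> \<bar>c\<bar> * ?m + (\<bar>c\<bar> * real h * ?m + \<bar>C\<bar> * ?m * ?X ^ k * ?L)"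
      using cost cst by argo
    also have "\<dots> = \<bar>c\<bar> * (real h + 1) * ?m + \<bar>C\<bar> * ?m * ?X ^ k * ?L"
      by (simp add: algebra_simps)
    also have "\<dots> \<le> \<bar>c\<bar> * (2 * ?L) * ?m * ?Q ^ k + \<bar>C\<bar> * ?m * (7 ^ k * ?Q ^ k) * ?L"
    proof (intro add_mono)
      have "\<bar>c\<bar> * (real h + 1) * ?m \<le> \<bar>c\<bar> * (2 * ?L) * ?m"
        using hL by (intro mult_right_mono mult_left_mono) auto
      also have "\<dots> \<le> \<bar>c\<bar> * (2 * ?L) * ?m * ?Q ^ k"
        using mult_left_mono[OF Q, of "\<bar>c\<bar> * (2 * ?L) * ?m"] L by simp
      finally show "\<bar>c\<bar> * (real h + 1) * ?m \<le> \<bar>c\<bar> * (2 * ?L) * ?m * ?Q ^ k" .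
      show "\<bar>C\<bar> * ?m * ?X ^ k * ?L \<le> \<bar>C\<bar> * ?m * (7 ^ k * ?Q ^ k) * ?L"
        using X L by (intro mult_right_mono mult_left_mono) auto
    qed
    also have "\<dots> = (2 * \<bar>c\<bar> + 7 ^ k * \<bar>C\<bar>) * (?m * ?Q ^ k * ?L)"
      by (simp add: algebra_simps)
    also have "\<dots> \<le> K * (?m * ?Q ^ k * ?L)"
      using K Q L by (intro mult_right_mono) auto
    also have "\<dots> = K * ?m * ?a ^ k * ?L / 2 ^ (k * h)"
      by (simp add: power_divide power_mult mult.commute)
    finally show ?thesis .
  qed
qed

theorem theorem4p15:
  fixes C c :: real
  shows "\<exists>K::real. \<forall>(V::'a set) E h \<phi> p cost.
     graph V E \<longrightarrow> real h \<le> log 2 (real (arboricity V E)) \<longrightarrow>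
     (arb_run C c 7 V E h \<phi> p cost \<longrightarrow>
        proper_edge_coloring E (max_degree V E + 3 * 2 ^ h) \<phi> \<and>
        cost \<le> K * real (card E) * real (arboricity V E) ^ 7 * log 2 (real (card V)) / 2 ^ (7 * h)) \<and>
     (arb_run C c 1 V E h \<phi> p cost \<longrightarrow>
        proper_edge_coloring E (max_degree V E + 3 * 2 ^ h) \<phi> \<and>
        cost \<le> K * real (card E) * real (arboricity V E) * log 2 (real (card V)) / 2 ^ h)"
proof (intro exI allI impI conjI)
  let ?K = "2 * \<bar>c\<bar> + 7 ^ 7 * \<bar>C\<bar>"
  fix V :: "'a set" and E h \<phi> p cost
  assume G: "graph V E" and h: "real h \<le> log 2 (real (arboricity V E))"
  {
    assume run: "arb_run C c 7 V E h \<phi> p cost"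
    show "proper_edge_coloring E (max_degree V E + 3 * 2 ^ h) \<phi>"
      using arb_run_proper_edge_coloring[OF G run] .
    show "cost \<le> ?K * real (card E) * real (arboricity V E) ^ 7 * log 2 (real (card V)) / 2 ^ (7 * h)"
      using arb_run_cost_le[OF G h run] by simp
  next
    assume run: "arb_run C c 1 V E h \<phi> p cost"
    show "proper_edge_coloring E (max_degree V E + 3 * 2 ^ h) \<phi>"
      using arb_run_proper_edge_coloring[OF G run] .
    show "cost \<le> ?K * real (card E) * real (arboricity V E) * log 2 (real (card V)) / 2 ^ h"
      using arb_run_cost_le[OF G h run, of ?K] by simp
  }
qed

end
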